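(* For every real $\gamma<1$ there exists an infinite binary sequence $\omega$ and an integer $N$ such that every substring $\omega_i\omega_{i+1}\ldots\omega_{i+n-1}$ of $\omega$ of length $n\ge N$ satisfies $K(\omega_i\ldots\omega_{i+n-1})\ge \gamma n$.
   Context: $K$ denotes prefix Kolmogorov complexity. *)

theory Defs
  imports Main "HOL-Library.Extended_Real"
begin

datatype recf =
    Z
  | S
  | Id nat
  | Cn recf "recf list"
  | Pr recf recf
  | Mn recf

inductive rec_eval :: "recf \<Rightarrow> nat list \<Rightarrow> nat \<Rightarrow> bool" where
  ev_Z:  "rec_eval Z xs 0"
| ev_S:  "rec_eval S (x # xs) (Suc x)"
| ev_Id: "i < length xs \<Longrightarrow> rec_eval (Id i) xs (xs ! i)"
| ev_Cn: "list_all2 (\<lambda>g y. rec_eval g xs y) gs ys \<Longrightarrow> rec_eval f ys z \<Longrightarrow>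
          rec_eval (Cn f gs) xs z"
| ev_Pr0: "rec_eval f xs y \<Longrightarrow> rec_eval (Pr f g) (0 # xs) y"
| ev_PrS: "rec_eval (Pr f g) (n # xs) y \<Longrightarrow> rec_eval g (n # y # xs) z \<Longrightarrow>
           rec_eval (Pr f g) (Suc n # xs) z"
| ev_Mn: "rec_eval f (n # xs) 0 \<Longrightarrow> (\<forall>m<n. \<exists>y. rec_eval f (m # xs) (Suc y)) \<Longrightarrow>
          rec_eval (Mn f) xs n"
monos list_all2_mono

definition partial_recursive :: "(nat \<Rightarrow> nat option) \<Rightarrow> bool" where
  "partial_recursive \<phi> \<longleftrightarrow> (\<exists>f. \<forall>x y. rec_eval f [x] y \<longleftrightarrow> \<phi> x = Some y)"

text \<open>Standard bijection between binary strings and naturals.\<close>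
fun bl2n :: "bool list \<Rightarrow> nat" where
  "bl2n [] = 0"
| "bl2n (b # bs) = (if b then 2 else 1) + 2 * bl2n bs"

type_synonym machine = "bool list \<Rightarrow> bool list option"

definition computable_machine :: "machine \<Rightarrow> bool" where
  "computable_machine M \<longleftrightarrow>
     (\<exists>\<phi>. partial_recursive \<phi> \<and> (\<forall>p. \<phi> (bl2n p) = map_option bl2n (M p)))"

definition prefix_free_machine :: "machine \<Rightarrow> bool" where
  "prefix_free_machine M \<longleftrightarrow> computable_machine M \<and>
     (\<forall>p r. M p \<noteq> None \<longrightarrow> M (p @ r) \<noteq> None \<longrightarrow> r = [])"

definition KM :: "machine \<Rightarrow> bool list \<Rightarrow> enat" where
  "KM M x = (if \<exists>p. M p = Some x
             then enat (LEAST n. \<exists>p. M p = Some x \<and> length p = n) else \<infinity>)"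

text \<open>Additively optimal (universal) prefix-free machines; prefix complexity K is KM U
  for such a U (well defined up to an additive constant).\<close>
definition optimal_prefix_machine :: "machine \<Rightarrow> bool" where
  "optimal_prefix_machine U \<longleftrightarrow> prefix_free_machine U \<and>
     (\<forall>M. prefix_free_machine M \<longrightarrow> (\<exists>c::nat. \<forall>x. KM U x \<le> KM M x + enat c))"

end

theory Submission
  imports Defs Complex_Main
begin

(* Put c = max gamma 0 < 1 and call a word forbidden if its length is
   at least N but its complexity is below c times its length.  A machine has fewer
   than 2^L programs of length < L, so there are at most 2^(c k + 1) forbidden
   words of each length k; the theorem asks for an infinite binary sequence none
   of whose factors is forbidden.

   1. Miller's counting argument (a word version of the local lemma): if the
      forbidden words are sparse enough, the numbers a_n of words of length n
      without forbidden factors satisfy a_n <= alpha * a_(n+1), hence all a_n > 0.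
      This is proved over an arbitrary finite alphabet.
   2. Compactness: if arbitrarily long avoiding words exist, a greedy choice of
      letters along extendable words yields an infinite avoiding sequence.
   3. For c < 1, alpha = 2 powr (-(1+c)/2) and N large, forbidden sets with at most
      2^(c k + 1) words of each length k >= N meet the sparseness condition of 1.
   4. Counting programs bounds the number of low-complexity words, and the
      theorem follows from 1-3. *)

section \<open>Words avoiding a set of forbidden factors\<close>

definition avoids :: "'a list set \<Rightarrow> 'a list \<Rightarrow> bool" where
  "avoids P u \<longleftrightarrow> (\<forall>i m. i + m \<le> length u \<longrightarrow> take m (drop i u) \<notin> P)"

definition avoiders :: "'a list set \<Rightarrow> nat \<Rightarrow> 'a list set" where
  "avoiders P n = {u. length u = n \<and> avoids P u}"

definition layer :: "'a list set \<Rightarrow> nat \<Rightarrow> 'a list set" where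
  "layer P k = {x \<in> P. length x = k}"

lemma finite_words_of_length: "finite {u :: 'a::finite list. length u = n}"
  using finite_lists_length_eq[of "UNIV :: 'a set" n] by simp

lemma finite_avoiders: "finite (avoiders (P :: 'a::finite list set) n)"
  by (rule finite_subset[OF _ finite_words_of_length[of n]]) (auto simp: avoiders_def)

lemma finite_layer: "finite (layer (P :: 'a::finite list set) k)"
  by (rule finite_subset[OF _ finite_words_of_length[of k]]) (auto simp: layer_def)

lemma avoids_take: "avoids P u \<Longrightarrow> avoids P (take j u)"
  unfolding avoids_def
proof (intro allI impI)
  fix i m assume avoid: "\<forall>i m. i + m \<le> length u \<longrightarrow> take m (drop i u) \<notin> P"
    and im: "i + m \<le> length (take j u)"
  then have "take m (drop i (take j u)) = take m (drop i u)"
    by (simp add: drop_take min_def split: if_splits)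
  with avoid im show "take m (drop i (take j u)) \<notin> P" by auto
qed

lemma append_letter_cases:
  assumes "[] \<notin> P" and u: "u \<in> avoiders P n"
  shows "u @ [b] \<in> avoiders P (Suc n) \<or>
    (\<exists>k \<in> {1..Suc n}. \<exists>v \<in> avoiders P (Suc n - k). \<exists>x \<in> layer P k. u @ [b] = v @ x)"
proof (cases "avoids P (u @ [b])")
  case True
  then show ?thesis using u by (simp add: avoiders_def)
next
  case False
  let ?w = "u @ [b]"
  from u have len: "length u = n" and avoid: "avoids P u" by (auto simp: avoiders_def)
  from False obtain i m where im: "i + m \<le> Suc n" and bad: "take m (drop i ?w) \<in> P"
    using len unfolding avoids_def by auto
  have suffix: "i + m = Suc n"
  proof (rule ccontr)
    assume "i + m \<noteq> Suc n"
    then have "i + m \<le> length u" using im len by simp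
    moreover have "take m (drop i ?w) = take m (drop i u)"
      using \<open>i + m \<le> length u\<close> by simp
    ultimately show False using avoid bad unfolding avoids_def by auto
  qed
  then have x: "take m (drop i ?w) = drop i ?w" using len by simp
  have "m \<noteq> 0"
  proof
    assume "m = 0"
    then show False using bad assms(1) by simp
  qed
  then have "i \<le> length u" using suffix len by simp
  then have "take i ?w = take i u" by simp
  moreover have "take i u \<in> avoiders P (Suc n - m)"
    using avoids_take[OF avoid] suffix len \<open>m \<noteq> 0\<close> by (simp add: avoiders_def)
  moreover have "drop i ?w \<in> layer P m" using bad x suffix len by (simp add: layer_def)
  moreover have "?w = take i ?w @ drop i ?w" by (rule append_take_drop_id[symmetric])
  moreover have "m \<in> {1..Suc n}" using \<open>m \<noteq> 0\<close> suffix by simp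
  ultimately show ?thesis by metis
qed

text \<open>Counting the two cases gives Miller's recurrence for the numbers of
  avoiding words.\<close>
lemma avoiders_recurrence:
  fixes P :: "'a::finite list set"
  assumes "[] \<notin> P"
  shows "card (UNIV :: 'a set) * card (avoiders P n) \<le> card (avoiders P (Suc n)) +
    (\<Sum>k=1..Suc n. card (avoiders P (Suc n - k)) * card (layer P k))"
proof -
  let ?ext = "(\<lambda>(u, b). u @ [b]) ` (avoiders P n \<times> (UNIV :: 'a set))"
  let ?bad = "\<lambda>k. (\<lambda>(v, x). v @ x) ` (avoiders P (Suc n - k) \<times> layer P k)"
  let ?Bad = "\<Union>k\<in>{1..Suc n}. ?bad k"
  have fin_bad: "finite (?bad k)" for k
    by (intro finite_imageI finite_cartesian_product finite_avoiders finite_layer)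
  have "inj_on (\<lambda>(u, b). u @ [b]) (avoiders P n \<times> (UNIV :: 'a set))"
    by (auto simp: inj_on_def)
  then have "card (UNIV :: 'a set) * card (avoiders P n) = card ?ext"
    by (simp add: card_image card_cartesian_product)
  also have "\<dots> \<le> card (avoiders P (Suc n) \<union> ?Bad)"
  proof (rule card_mono)
    show "finite (avoiders P (Suc n) \<union> ?Bad)"
      using fin_bad finite_avoiders by blast
    show "?ext \<subseteq> avoiders P (Suc n) \<union> ?Bad"
    proof
      fix w assume "w \<in> ?ext"
      then obtain u b where u: "u \<in> avoiders P n" and w: "w = u @ [b]" by auto
      from append_letter_cases[OF assms u, of b]
      show "w \<in> avoiders P (Suc n) \<union> ?Bad"
      proof (elim disjE bexE)
        fix k v x assume "k \<in> {1..Suc n}" "v \<in> avoiders P (Suc n - k)" "x \<in> layer P k"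
          and "u @ [b] = v @ x"
        then have "w \<in> ?bad k" unfolding w by (intro image_eqI[where x = "(v, x)"]) simp_all
        with \<open>k \<in> {1..Suc n}\<close> show ?thesis by blast
      qed (simp add: w)
    qed
  qed
  also have "\<dots> \<le> card (avoiders P (Suc n)) + card ?Bad"
    by (rule card_Un_le)
  also have "card ?Bad \<le> (\<Sum>k=1..Suc n. card (?bad k))"
    by (rule card_UN_le) simp
  also have "(\<Sum>k=1..Suc n. card (?bad k)) \<le>
      (\<Sum>k=1..Suc n. card (avoiders P (Suc n - k)) * card (layer P k))"
    by (intro sum_mono order_trans[OF card_image_le])
       (simp_all add: finite_avoiders finite_layer card_cartesian_product)
  finally show ?thesis by simp
qed

lemma ratio_chain:
  fixes a :: "nat \<Rightarrow> real"
  assumes step: "\<And>j. j < n \<Longrightarrow> a j \<le> \<alpha> * a (Suc j)" and "0 \<le> \<alpha>" and "d \<le> n"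
  shows "a (n - d) \<le> \<alpha> ^ d * a n"
  using \<open>d \<le> n\<close>
proof (induction d)
  case 0
  then show ?case by simp
next
  case (Suc d)
  have "a (n - Suc d) \<le> \<alpha> * a (Suc (n - Suc d))" using step Suc.prems by simp
  also have "Suc (n - Suc d) = n - d" using Suc.prems by simp
  also have "\<alpha> * a (n - d) \<le> \<alpha> * (\<alpha> ^ d * a n)"
    using Suc \<open>0 \<le> \<alpha>\<close> by (intro mult_left_mono) auto
  finally show ?case by simp
qed

text \<open>By strong
  induction, the earlier ratios bound a_(n+1-k) by alpha^(k-1) a_n in the
  recurrence, which then rearranges to a_n <= alpha a_(n+1).\<close>
lemma avoiders_growth:
  fixes P :: "'a::finite list set" and \<alpha> :: real
  assumes "[] \<notin> P" and "0 < \<alpha>"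
    and sparse: "\<And>m. (\<Sum>k=1..m. real (card (layer P k)) * \<alpha> ^ (k - 1))
                        \<le> real (card (UNIV :: 'a set)) - 1 / \<alpha>"
  shows "real (card (avoiders P n)) \<le> \<alpha> * real (card (avoiders P (Suc n)))"
proof (induction n rule: less_induct)
  case (less n)
  define a where "a j = real (card (avoiders P j))" for j
  define q where "q = real (card (UNIV :: 'a set))"
  have earlier: "a (Suc n - k) \<le> \<alpha> ^ (k - 1) * a n" if "k \<in> {1..Suc n}" for k
  proof -
    have "a (n - (k - 1)) \<le> \<alpha> ^ (k - 1) * a n"
      using that \<open>0 < \<alpha>\<close> by (intro ratio_chain) (auto simp: a_def less)
    moreover have "Suc n - k = n - (k - 1)" using that by simp
    ultimately show ?thesis by (simp only:)
  qed
  have "q * a n \<le> a (Suc n) + (\<Sum>k=1..Suc n. a (Suc n - k) * real (card (layer P k)))"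
    using of_nat_mono[OF avoiders_recurrence[OF assms(1), of n]]
    by (simp add: a_def q_def of_nat_sum)
  also have "\<dots> \<le> a (Suc n) + (\<Sum>k=1..Suc n. \<alpha> ^ (k - 1) * a n * real (card (layer P k)))"
  proof (intro add_left_mono sum_mono mult_right_mono)
    fix k assume "k \<in> {1..Suc n}"
    then show "a (Suc n - k) \<le> \<alpha> ^ (k - 1) * a n" by (rule earlier)
  qed simp
  also have "\<dots> = a (Suc n) + a n * (\<Sum>k=1..Suc n. real (card (layer P k)) * \<alpha> ^ (k - 1))"
    by (simp add: sum_distrib_left mult_ac del: sum.cl_ivl_Suc)
  also have "\<dots> \<le> a (Suc n) + a n * (q - 1 / \<alpha>)"
    using mult_left_mono[OF sparse[of "Suc n"], of "a n"] by (simp add: a_def q_def)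
  finally have "a n * (1 / \<alpha>) \<le> a (Suc n)" by (simp add: right_diff_distrib)
  then have "a n \<le> a (Suc n) * \<alpha>" using \<open>0 < \<alpha>\<close> by (simp add: pos_divide_le_eq)
  then show ?case by (simp add: a_def mult.commute)
qed

lemma avoiders_nonempty:
  fixes P :: "'a::finite list set" and \<alpha> :: real
  assumes "[] \<notin> P" and "0 < \<alpha>"
    and "\<And>m. (\<Sum>k=1..m. real (card (layer P k)) * \<alpha> ^ (k - 1))
               \<le> real (card (UNIV :: 'a set)) - 1 / \<alpha>"
  shows "avoiders P n \<noteq> {}"
proof -
  have "avoiders P 0 = {[]}" using assms(1) by (auto simp: avoiders_def avoids_def)
  then have "1 \<le> \<alpha> ^ n * real (card (avoiders P n))"
    using ratio_chain[of n "\<lambda>j. real (card (avoiders P j))" \<alpha> n]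
      avoiders_growth[OF assms] \<open>0 < \<alpha>\<close> by simp
  then show ?thesis by auto
qed

section \<open>From arbitrarily long avoiding words to an infinite avoiding sequence\<close>

definition extendable :: "'a list set \<Rightarrow> 'a list \<Rightarrow> bool" where
  "extendable P u \<longleftrightarrow> (\<forall>m. \<exists>v. length v = m \<and> avoids P (u @ v))"

lemma extendable_avoids: "extendable P u \<Longrightarrow> avoids P u"
  unfolding extendable_def by (metis append_Nil2 length_0_conv)

text \<open>Over a finite alphabet some one-letter extension of an extendable word is
  again extendable (the step of Koenig's lemma): otherwise each letter b admits a
  length m b beyond which no extension through b avoids P, and an avoiding
  extension longer than all m b gives a contradiction.\<close>
lemma extendable_step:
  fixes u :: "'a::finite list"
  assumes "extendable P u"
  shows "\<exists>b. extendable P (u @ [b])"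
proof (rule ccontr)
  assume "\<nexists>b. extendable P (u @ [b])"
  then have "\<forall>b. \<exists>m. \<forall>v. length v = m \<longrightarrow> \<not> avoids P (u @ [b] @ v)"
    by (simp add: extendable_def)
  then obtain m where m: "\<And>b v. length v = m b \<Longrightarrow> \<not> avoids P (u @ [b] @ v)"
    by metis
  obtain v where v: "length v = Suc (Max (range m))" "avoids P (u @ v)"
    using assms unfolding extendable_def by blast
  then obtain b v' where bv: "v = b # v'" by (cases v) auto
  have "m b \<le> Max (range m)" by (simp add: Max_ge)
  then have "length (take (m b) v') = m b" using v bv by simp
  moreover have "avoids P (u @ [b] @ take (m b) v')"
    using avoids_take[OF v(2), of "length u + Suc (m b)"] bv by simp
  ultimately show False using m by blast
qed

definition next_letter :: "'a list set \<Rightarrow> 'a list \<Rightarrow> 'a" where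
  "next_letter P u = (SOME b. extendable P (u @ [b]))"

fun greedy_prefix :: "'a list set \<Rightarrow> nat \<Rightarrow> 'a list" where
  "greedy_prefix P 0 = []"
| "greedy_prefix P (Suc n) = greedy_prefix P n @ [next_letter P (greedy_prefix P n)]"

lemma greedy_prefix_extendable:
  fixes P :: "'a::finite list set"
  assumes "extendable P []"
  shows "extendable P (greedy_prefix P n)"
proof (induction n)
  case 0
  then show ?case using assms by simp
next
  case (Suc n)
  then show ?case
    unfolding greedy_prefix.simps next_letter_def by (rule someI_ex[OF extendable_step])
qed

lemma greedy_prefix_eq:
  "greedy_prefix P n = map (\<lambda>k. next_letter P (greedy_prefix P k)) [0..<n]"
  by (induction n) simp_all

lemma avoiding_sequence:
  fixes P :: "'a::finite list set"
  assumes "\<And>n. avoiders P n \<noteq> {}"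
  shows "\<exists>\<omega>. \<forall>i n. map (\<lambda>k. \<omega> (i + k)) [0..<n] \<notin> P"
proof -
  have start: "extendable P []" using assms by (fastforce simp: extendable_def avoiders_def)
  define \<omega> where "\<omega> k = next_letter P (greedy_prefix P k)" for k
  have "map (\<lambda>k. \<omega> (i + k)) [0..<n] \<notin> P" for i n
  proof -
    have "map \<omega> [0..<i + n] = greedy_prefix P (i + n)"
      unfolding \<omega>_def by (rule greedy_prefix_eq[symmetric])
    then have "avoids P (map \<omega> [0..<i + n])"
      using extendable_avoids[OF greedy_prefix_extendable[OF start]] by simp
    moreover have "map (\<lambda>k. \<omega> (i + k)) [0..<n] = take n (drop i (map \<omega> [0..<i + n]))"
      by (rule nth_equalityI) auto
    ultimately show ?thesis unfolding avoids_def by (metis length_map length_upt diff_zero order_refl)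
  qed
  then show ?thesis by blast
qed

section \<open>Few words have low complexity\<close>

lemma card_words_of_length: "card {u :: 'a::finite list. length u = n} = card (UNIV :: 'a set) ^ n"
  using card_lists_length_eq[of "UNIV :: 'a set" n] by simp

lemma finite_short_words: "finite {p :: 'a::finite list. length p < L}"
  by (rule finite_subset[OF _ finite_lists_length_le[of "UNIV :: 'a set" L]]) auto

lemma card_short_programs: "card {p :: bool list. length p < L} < 2 ^ L"
proof (induction L)
  case 0
  then show ?case by simp
next
  case (Suc L)
  have "{p :: bool list. length p < Suc L} = {p. length p < L} \<union> {p. length p = L}" by auto
  then have "card {p :: bool list. length p < Suc L} \<le> card {p :: bool list. length p < L} + 2 ^ L"
    using card_Un_le[of "{p :: bool list. length p < L}" "{p. length p = L}"]
    by (simp add: card_words_of_length)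
  with Suc show ?case by simp
qed

lemma KM_program:
  assumes "KM M x = enat L"
  shows "\<exists>p. M p = Some x \<and> length p = L"
proof -
  have ex: "\<exists>p. M p = Some x"
    using assms by (auto simp: KM_def split: if_splits)
  then have "L = (LEAST n. \<exists>p. M p = Some x \<and> length p = n)"
    using assms by (simp add: KM_def)
  then show ?thesis
    using LeastI_ex[of "\<lambda>n. \<exists>p. M p = Some x \<and> length p = n"] ex by blast
qed

text \<open>Every machine (prefix-free or not) has fewer than 2^L outputs of complexity
  below L, since each of them needs its own program shorter than L.\<close>
lemma card_low_complexity:
  shows "finite {x. KM M x < enat L}" and "card {x. KM M x < enat L} < 2 ^ L"
proof -
  have sub: "{x. KM M x < enat L} \<subseteq> (\<lambda>p. the (M p)) ` {p. length p < L}"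
  proof
    fix x assume "x \<in> {x. KM M x < enat L}"
    then obtain j where "KM M x = enat j" and "j < L"
      by (cases "KM M x") auto
    then obtain p where "M p = Some x" and "length p = j" using KM_program by blast
    with \<open>j < L\<close> show "x \<in> (\<lambda>p. the (M p)) ` {p. length p < L}"
      by (intro image_eqI[where x = p]) simp_all
  qed
  then show "finite {x. KM M x < enat L}"
    by (rule finite_subset) (intro finite_imageI finite_short_words)
  have "card {x. KM M x < enat L} \<le> card ((\<lambda>p. the (M p)) ` {p :: bool list. length p < L})"
    by (intro card_mono sub finite_imageI finite_short_words)
  also have "\<dots> \<le> card {p :: bool list. length p < L}"
    by (intro card_image_le finite_short_words)
  finally show "card {x. KM M x < enat L} < 2 ^ L"
    using card_short_programs by (rule le_less_trans)
qed

lemma card_compressible_words: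
  fixes c :: real
  assumes "0 \<le> c"
  shows "real (card {x. length x = k \<and> ereal_of_enat (KM M x) < ereal (c * k)}) \<le> 2 powr (c * k + 1)"
proof -
  define L where "L = nat \<lceil>c * k\<rceil>"
  have sub: "{x. length x = k \<and> ereal_of_enat (KM M x) < ereal (c * k)} \<subseteq> {x. KM M x < enat L}"
  proof
    fix x assume "x \<in> {x. length x = k \<and> ereal_of_enat (KM M x) < ereal (c * k)}"
    then obtain j where "KM M x = enat j" and "real j < c * k"
      by (cases "KM M x") auto
    moreover have "int j < \<lceil>c * k\<rceil>" using \<open>real j < c * k\<close> by (simp add: less_ceiling_iff)
    ultimately show "x \<in> {x. KM M x < enat L}" unfolding L_def by simp
  qed
  have "card {x. length x = k \<and> ereal_of_enat (KM M x) < ereal (c * k)} < 2 ^ L"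
    using card_mono[OF card_low_complexity(1) sub] card_low_complexity(2) by (rule le_less_trans)
  then have "real (card {x. length x = k \<and> ereal_of_enat (KM M x) < ereal (c * k)}) \<le> 2 powr L"
    by (simp add: powr_realpow flip: of_nat_less_iff)
  also have "\<dots> \<le> 2 powr (c * k + 1)"
  proof (rule powr_mono)
    have "real L = of_int \<lceil>c * k\<rceil>" using assms unfolding L_def by simp
    then show "real L \<le> c * k + 1" by linarith
  qed simp
  finally show ?thesis .
qed

section \<open>Sparse sets of forbidden binary words are avoidable\<close>

lemma geometric_tail_bound:
  fixes \<rho> :: real
  assumes "0 \<le> \<rho>" and "\<rho> < 1"
  shows "(\<Sum>k=N..m. \<rho> ^ k) \<le> \<rho> ^ N / (1 - \<rho>)"
proof (cases "N \<le> m")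
  case True
  have "(1 - \<rho>) * (\<Sum>k=N..m. \<rho> ^ k) = \<rho> ^ N - \<rho> ^ Suc m"
    by (rule sum_gp_multiplied[OF True])
  also have "\<dots> \<le> \<rho> ^ N" using assms(1) by simp
  finally show ?thesis using assms(2) by (simp add: pos_le_divide_eq mult.commute)
next
  case False
  then show ?thesis using assms by simp
qed

text \<open>With alpha = 2 powr (-(1+c)/2) and rho = 2 powr ((c-1)/2), the bound
  2 powr (c k + 1) on the k-th layer contributes (2/alpha) rho^k to Miller's
  weighted sum.\<close>
lemma layer_weight:
  fixes c :: real
  assumes "1 \<le> k"
  shows "2 powr (c * k + 1) * (2 powr (-(1 + c) / 2)) ^ (k - 1)
       = 2 / 2 powr (-(1 + c) / 2) * (2 powr ((c - 1) / 2)) ^ k"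
proof -
  define \<alpha> :: real where "\<alpha> = 2 powr (-(1 + c) / 2)"
  have "\<alpha> ^ k = \<alpha> * \<alpha> ^ (k - 1)" using assms by (simp add: power_eq_if)
  then have "\<alpha> ^ (k - 1) = \<alpha> ^ k / \<alpha>" by (simp add: \<alpha>_def)
  moreover have "2 powr (c * k + 1) * \<alpha> ^ k = 2 * (2 powr ((c - 1) / 2)) ^ k"
  proof -
    have "2 powr (c * k + 1) * \<alpha> ^ k = 2 powr (c * k + 1 + real k * (-(1 + c) / 2))"
      by (simp add: \<alpha>_def powr_add powr_power)
    also have "c * k + 1 + real k * (-(1 + c) / 2) = 1 + real k * ((c - 1) / 2)"
      by (simp add: field_simps)
    finally show ?thesis by (simp add: powr_add powr_power)
  qed
  ultimately show ?thesis unfolding \<alpha>_def[symmetric] by (simp add: field_simps)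
qed

lemma sparse_weight_sum:
  fixes c :: real
  assumes "c < 1"
  obtains N :: nat where "1 \<le> N"
    and "\<And>(b :: nat \<Rightarrow> real) m. (\<And>k. b k \<le> (if N \<le> k then 2 powr (c * k + 1) else 0)) \<Longrightarrow>
           (\<Sum>k=1..m. b k * (2 powr (-(1 + c) / 2)) ^ (k - 1)) \<le> 2 - 1 / 2 powr (-(1 + c) / 2)"
proof -
  define \<alpha> :: real where "\<alpha> = 2 powr (-(1 + c) / 2)"
  define \<rho> :: real where "\<rho> = 2 powr ((c - 1) / 2)"
  have "0 < \<alpha>" by (simp add: \<alpha>_def)
  have "0 < \<rho>" and "\<rho> < 1" using assms by (simp_all add: \<rho>_def powr_less_one)
  have "1 / 2 < \<alpha>"
  proof -
    have "(2::real) powr (-1) < 2 powr (-(1 + c) / 2)" using assms by (intro powr_less_mono) auto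
    then show ?thesis by (simp add: \<alpha>_def powr_minus)
  qed
  obtain N0 where N0: "\<rho> ^ N0 < (1 - \<rho>) * (\<alpha> - 1 / 2)"
    using real_arch_pow_inv[of "(1 - \<rho>) * (\<alpha> - 1 / 2)" \<rho>] \<open>\<rho> < 1\<close> \<open>1 / 2 < \<alpha>\<close> by auto
  define N where "N = Suc N0"
  have tail: "\<rho> ^ N / (1 - \<rho>) \<le> \<alpha> - 1 / 2"
  proof -
    have "\<rho> ^ N \<le> \<rho> ^ N0"
      unfolding N_def using \<open>0 < \<rho>\<close> \<open>\<rho> < 1\<close> by (intro power_decreasing) auto
    then show ?thesis using N0 \<open>\<rho> < 1\<close> by (simp add: pos_divide_le_eq mult.commute)
  qed
  show thesis
  proof (rule that)
    show "1 \<le> N" by (simp add: N_def)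
    fix b :: "nat \<Rightarrow> real" and m
    assume b: "\<And>k. b k \<le> (if N \<le> k then 2 powr (c * k + 1) else 0)"
    have "(\<Sum>k=1..m. b k * \<alpha> ^ (k - 1)) \<le> (\<Sum>k=1..m. if N \<le> k then 2 / \<alpha> * \<rho> ^ k else 0)"
    proof (rule sum_mono)
      fix k assume "k \<in> {1..m}"
      then have "b k * \<alpha> ^ (k - 1) \<le> (if N \<le> k then 2 powr (c * k + 1) else 0) * \<alpha> ^ (k - 1)"
        using b \<open>0 < \<alpha>\<close> by (intro mult_right_mono) auto
      also have "\<dots> = (if N \<le> k then 2 / \<alpha> * \<rho> ^ k else 0)"
        using layer_weight[of k c] \<open>k \<in> {1..m}\<close> by (simp add: \<alpha>_def \<rho>_def)
      finally show "b k * \<alpha> ^ (k - 1) \<le> (if N \<le> k then 2 / \<alpha> * \<rho> ^ k else 0)" .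
    qed
    also have "\<dots> = 2 / \<alpha> * (\<Sum>k=N..m. \<rho> ^ k)"
    proof -
      have "{k \<in> {1..m}. N \<le> k} = {N..m}" using \<open>1 \<le> N\<close> by auto
      then show ?thesis by (simp add: sum.inter_filter[symmetric] sum_distrib_left)
    qed
    also have "\<dots> \<le> 2 / \<alpha> * (\<alpha> - 1 / 2)"
      using geometric_tail_bound[of \<rho> N m] tail \<open>0 < \<rho>\<close> \<open>\<rho> < 1\<close> \<open>0 < \<alpha>\<close>
      by (intro mult_left_mono) auto
    also have "\<dots> = 2 - 1 / \<alpha>" using \<open>0 < \<alpha>\<close> by (simp add: field_simps)
    finally show "(\<Sum>k=1..m. b k * (2 powr (-(1 + c) / 2)) ^ (k - 1)) \<le> 2 - 1 / 2 powr (-(1 + c) / 2)"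
      by (simp add: \<alpha>_def)
  qed
qed

lemma sparse_factors_avoidable:
  fixes c :: real
  assumes "c < 1"
  obtains N :: nat where
    "\<And>P :: bool list set. (\<And>x. x \<in> P \<Longrightarrow> N \<le> length x) \<Longrightarrow>
       (\<And>k. real (card (layer P k)) \<le> 2 powr (c * k + 1)) \<Longrightarrow>
       \<exists>\<omega>. \<forall>i n. map (\<lambda>k. \<omega> (i + k)) [0..<n] \<notin> P"
proof -
  obtain N where "1 \<le> N" and weights:
    "\<And>(b :: nat \<Rightarrow> real) m. (\<And>k. b k \<le> (if N \<le> k then 2 powr (c * k + 1) else 0)) \<Longrightarrow>
       (\<Sum>k=1..m. b k * (2 powr (-(1 + c) / 2)) ^ (k - 1)) \<le> 2 - 1 / 2 powr (-(1 + c) / 2)"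
    using sparse_weight_sum[OF assms] by blast
  show thesis
  proof (rule that)
    fix P :: "bool list set"
    assume long: "\<And>x. x \<in> P \<Longrightarrow> N \<le> length x"
      and few: "\<And>k. real (card (layer P k)) \<le> 2 powr (c * k + 1)"
    have "[] \<notin> P" using long \<open>1 \<le> N\<close> by force
    have bound: "real (card (layer P k)) \<le> (if N \<le> k then 2 powr (c * k + 1) else 0)" for k
    proof (cases "N \<le> k")
      case False
      then have "layer P k = {}" using long by (auto simp: layer_def)
      then show ?thesis by simp
    qed (simp add: few)
    have "0 < (2 :: real) powr (-(1 + c) / 2)" by simp
    then have "avoiders P n \<noteq> {}" for n
    proof (rule avoiders_nonempty[OF \<open>[] \<notin> P\<close>])
      show "(\<Sum>k=1..m. real (card (layer P k)) * (2 powr (-(1 + c) / 2)) ^ (k - 1))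
          \<le> real (card (UNIV :: bool set)) - 1 / 2 powr (-(1 + c) / 2)" for m
        using weights[OF bound, of m] by simp
    qed
    then show "\<exists>\<omega>. \<forall>i n. map (\<lambda>k. \<omega> (i + k)) [0..<n] \<notin> P"
      by (rule avoiding_sequence)
  qed
qed

theorem mainTheorem2:
  fixes U :: machine
  assumes "optimal_prefix_machine U"
  shows "\<forall>\<gamma>::real. \<gamma> < 1 \<longrightarrow>
           (\<exists>(\<omega>::nat \<Rightarrow> bool) (N::nat). \<forall>i n. N \<le> n \<longrightarrow>
              ereal (\<gamma> * real n) \<le> ereal_of_enat (KM U (map (\<lambda>k. \<omega> (i + k)) [0..<n])))"
proof (intro allI impI)
  fix \<gamma> :: real
  assume "\<gamma> < 1"
  define c where "c = max \<gamma> 0"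
  have "0 \<le> c" "c < 1" "\<gamma> \<le> c" using \<open>\<gamma> < 1\<close> by (auto simp: c_def)
  obtain N where avoidable: "\<And>P :: bool list set. (\<And>x. x \<in> P \<Longrightarrow> N \<le> length x) \<Longrightarrow>
       (\<And>k. real (card (layer P k)) \<le> 2 powr (c * k + 1)) \<Longrightarrow>
       \<exists>\<omega>. \<forall>i n. map (\<lambda>k. \<omega> (i + k)) [0..<n] \<notin> P"
    using sparse_factors_avoidable[OF \<open>c < 1\<close>] by blast
  define P where "P = {x. N \<le> length x \<and> ereal_of_enat (KM U x) < ereal (c * real (length x))}"
  have "real (card (layer P k)) \<le> 2 powr (c * k + 1)" for k
  proof -
    have "layer P k \<subseteq> {x. length x = k \<and> ereal_of_enat (KM U x) < ereal (c * k)}"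
      by (auto simp: layer_def P_def)
    then have "card (layer P k) \<le> card {x. length x = k \<and> ereal_of_enat (KM U x) < ereal (c * k)}"
      by (intro card_mono finite_subset[OF _ finite_words_of_length[of k]]) auto
    then show ?thesis using card_compressible_words[OF \<open>0 \<le> c\<close>, of k U] by linarith
  qed
  then obtain \<omega> where \<omega>: "\<forall>i n. map (\<lambda>k. \<omega> (i + k)) [0..<n] \<notin> P"
    using avoidable[of P] by (auto simp: P_def)
  have "ereal (\<gamma> * real n) \<le> ereal_of_enat (KM U (map (\<lambda>k. \<omega> (i + k)) [0..<n]))"
    if "N \<le> n" for i n
  proof -
    have "ereal (\<gamma> * real n) \<le> ereal (c * real n)"
      using \<open>\<gamma> \<le> c\<close> by (simp add: mult_right_mono)
    also have "\<dots> \<le> ereal_of_enat (KM U (map (\<lambda>k. \<omega> (i + k)) [0..<n]))"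
      using \<omega> that by (auto simp: P_def not_less)
    finally show ?thesis .
  qed
  then show "\<exists>\<omega> N. \<forall>i n. N \<le> n \<longrightarrow>
      ereal (\<gamma> * real n) \<le> ereal_of_enat (KM U (map (\<lambda>k. \<omega> (i + k)) [0..<n]))"
    by blast
qed

end
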